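(* For a given $r \in (R_c,R_0)$ the function $s \mapsto \sigma(s;r)$ increases for $s \in (s_0,s_-(r))$, decreases for $s \in (s_-(r),s_+(r))$ and increases to infinity for $s \in (s_+(r),+\infty)$.
   Context: Setting: two-dimensional steady unidirectional water waves with vorticity on finite depth, in non-dimensional units (mass flux $m=1$, gravity $g=1$). The vorticity $\omega=\omega(p)$ is a function of the stream function value $p\in[0,1]$, and $\Omega(p)=\int_0^p \omega(\tau)\,d\tau$. Let $s_0=\sqrt{\max_{p\in[0,1]}2\Omega(p)}$. For $s>s_0$ the laminar (stream) solutions in height-function form are $H(p;s)=\int_0^p \frac{d\tau}{\sqrt{s^2-2\Omega(\tau)}}$, $p\in[0,1]$, with depth $d(s)=H(1;s)$ and Bernoulli constant $R(s)=\tfrac12 s^2-\Omega(1)+d(s)$. As a function of $s$, $R(s)$ decreases from $R_0=\lim_{s\to s_0+}R(s)$ to $R_c$ as $s$ goes from $s_0$ to the critical value $s_c$ (defined by $\int_0^1 (s^2-2\Omega(p))^{-3/2}dp=1$), and increases to infinity for $s>s_c$. Hence for $r\in(R_c,R_0)$ the equation $R(s)=r$ has exactly two solutions $s_-(r)<s_c<s_+(r)$. For $r>R_c$ and $s>s_0$ define $$\sigma(s;r)=\int_0^1\Big(\frac{1}{2H_p^2(p;s)}-H(p;s)-\Omega(p)+\Omega(1)+r\Big)H_p(p;s)\,dp,$$ i.e. the flow force constant of the stream solution $H(p;s)$ with its Bernoulli constant $R(s)$ replaced by $r$. *)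

theory Defs
  imports "HOL-Analysis.Analysis"
begin

definition Omega :: "(real \<Rightarrow> real) \<Rightarrow> real \<Rightarrow> real" where
  "Omega \<omega> p = integral {0..p} \<omega>"

definition s0 :: "(real \<Rightarrow> real) \<Rightarrow> real" where
  "s0 \<omega> = sqrt (Sup ((\<lambda>p. 2 * Omega \<omega> p) ` {0..1}))"

definition Hp :: "(real \<Rightarrow> real) \<Rightarrow> real \<Rightarrow> real \<Rightarrow> real" where
  "Hp \<omega> p s = 1 / sqrt (s\<^sup>2 - 2 * Omega \<omega> p)"

definition H :: "(real \<Rightarrow> real) \<Rightarrow> real \<Rightarrow> real \<Rightarrow> real" where
  "H \<omega> p s = integral {0..p} (\<lambda>\<tau>. Hp \<omega> \<tau> s)"

definition depth :: "(real \<Rightarrow> real) \<Rightarrow> real \<Rightarrow> real" where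
  "depth \<omega> s = H \<omega> 1 s"

definition R :: "(real \<Rightarrow> real) \<Rightarrow> real \<Rightarrow> real" where
  "R \<omega> s = s\<^sup>2 / 2 - Omega \<omega> 1 + depth \<omega> s"

text \<open>R_0 = lim_{s -> s0+} R(s), taken in the extended reals (it may be +infinity).\<close>
definition R0 :: "(real \<Rightarrow> real) \<Rightarrow> ereal" where
  "R0 \<omega> = Lim (at_right (s0 \<omega>)) (\<lambda>s. ereal (R \<omega> s))"

definition sigma :: "(real \<Rightarrow> real) \<Rightarrow> real \<Rightarrow> real \<Rightarrow> real" where
  "sigma \<omega> s r = integral {0..1} (\<lambda>p.
     (1 / (2 * (Hp \<omega> p s)\<^sup>2) - H \<omega> p s - Omega \<omega> p + Omega \<omega> 1 + r) * Hp \<omega> p s)"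

end

theory Submission
  imports Defs
begin

(* Differentiating under the integral sign gives d'(s) = -s I(s), hence R'(s) = s (1 - I(s)),
   where I(s) = int_0^1 (s^2 - 2 Omega)^(-3/2) dp is strictly decreasing with I(s_c) = 1; so R
   decreases on (s0, s_c] and increases on [s_c, oo).  Since H_p is the p-derivative of H,
   int_0^1 H H_p dp = d^2/2, which turns sigma into
   int_0^1 (sqrt(s^2 - 2 Omega)/2 + (Omega(1) - Omega + r) H_p) dp - d^2/2, and differentiating
   again gives sigma'(s) = s I(s) (R(s) - r).  So sigma' has the sign of R(s) - r: positive on
   (s0, s_-), negative on (s_-, s_+) and positive beyond s_+.  Finally sigma(s) >= s/2 - C for
   large s, because sqrt(s^2 - 2 Omega) >= s - s0. *)

lemma strict_mono_on_if_deriv_pos: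
  fixes f f' :: "real \<Rightarrow> real"
  assumes "convex I" "continuous_on I f"
    and "\<And>x. x \<in> interior I \<Longrightarrow> (f has_real_derivative f' x) (at x)"
    and "\<And>x. x \<in> interior I \<Longrightarrow> 0 < f' x"
  shows "strict_mono_on I f"
proof (rule strict_mono_onI)
  fix x y assume xy: "x \<in> I" "y \<in> I" "x < y"
  then have "{x..y} \<subseteq> I"
    using assms(1) closed_segment_eq_real_ivl1[of x y]
    by (metis convex_contains_segment less_imp_le)
  show "f x < f y"
  proof (rule DERIV_pos_imp_increasing_open[OF \<open>x < y\<close>])
    fix z assume "x < z" "z < y"
    then have "z \<in> interior I"
      using interior_mono[OF \<open>{x..y} \<subseteq> I\<close>] by auto
    then show "\<exists>d. (f has_real_derivative d) (at z) \<and> 0 < d"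
      using assms(3,4) by blast
  next
    show "continuous_on {x..y} f"
      using assms(2) \<open>{x..y} \<subseteq> I\<close> by (rule continuous_on_subset)
  qed
qed

lemma strict_antimono_on_if_deriv_neg:
  fixes f f' :: "real \<Rightarrow> real"
  assumes "convex I" "continuous_on I f"
    and "\<And>x. x \<in> interior I \<Longrightarrow> (f has_real_derivative f' x) (at x)"
    and "\<And>x. x \<in> interior I \<Longrightarrow> f' x < 0"
  shows "strict_antimono_on I f"
proof -
  have "strict_mono_on I (\<lambda>x. - f x)"
  proof (rule strict_mono_on_if_deriv_pos[OF assms(1)])
    show "continuous_on I (\<lambda>x. - f x)"
      using assms(2) by (rule continuous_on_minus)
    show "((\<lambda>x. - f x) has_real_derivative - f' x) (at x)" if "x \<in> interior I" for x
      using assms(3)[OF that] by (rule DERIV_minus)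
    show "0 < - f' x" if "x \<in> interior I" for x
      using assms(4)[OF that] by simp
  qed
  then show ?thesis
    by (simp add: monotone_on_def)
qed

lemma has_real_derivative_integral_param:
  fixes f fx :: "real \<Rightarrow> real \<Rightarrow> real"
  assumes "open U" "convex U" "x \<in> U"
    and "\<And>x t. x \<in> U \<Longrightarrow> t \<in> {a..b} \<Longrightarrow> ((\<lambda>x. f x t) has_real_derivative fx x t) (at x)"
    and "\<And>x. x \<in> U \<Longrightarrow> continuous_on {a..b} (f x)"
    and "continuous_on (U \<times> {a..b}) (\<lambda>(x, t). fx x t)"
  shows "((\<lambda>x. integral {a..b} (f x)) has_real_derivative integral {a..b} (fx x)) (at x)"
proof -
  have "((\<lambda>x. integral (cbox a b) (f x)) has_real_derivative integral (cbox a b) (fx x))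
      (at x within U)"
  proof (rule leibniz_rule_field_derivative)
    show "((\<lambda>x. f x t) has_real_derivative fx x t) (at x within U)"
      if "x \<in> U" "t \<in> cbox a b" for x t
      using assms(4) that by (simp add: has_field_derivative_at_within)
    show "f x integrable_on cbox a b" if "x \<in> U" for x
      using assms(5)[OF that] by (simp add: integrable_continuous_real)
  qed (use assms in simp_all)
  then show ?thesis
    using at_within_open[OF \<open>x \<in> U\<close> \<open>open U\<close>] by simp
qed

lemma powr_minus_three_halves:
  fixes a :: real
  assumes "0 < a"
  shows "a powr (-3/2) = (1 / sqrt a) ^ 3"
proof -
  have "1 / sqrt a = a powr (- (1/2))"
    using assms by (simp add: powr_minus_divide powr_half_sqrt)
  then have "(1 / sqrt a) ^ 3 = a powr (of_nat 3 * - (1/2))"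
    using assms by (simp add: powr_power)
  then show ?thesis
    by simp
qed

(* The I(s) above, since H_p^3 = (s^2 - 2 Omega)^(-3/2). *)
definition Hp_cube_integral :: "(real \<Rightarrow> real) \<Rightarrow> real \<Rightarrow> real" where
  "Hp_cube_integral \<omega> s = integral {0..1} (\<lambda>p. (Hp \<omega> p s) ^ 3)"

locale vorticity =
  fixes \<omega> :: "real \<Rightarrow> real"
  assumes integrable: "\<omega> integrable_on {0..1}"
begin

lemma continuous_on_Omega: "continuous_on {0..1} (Omega \<omega>)"
proof -
  have "Omega \<omega> = (\<lambda>x. integral {0..x} \<omega>)"
    by (simp add: Omega_def fun_eq_iff)
  then show ?thesis
    using indefinite_integral_continuous_1[OF integrable] by simp
qed

lemma Omega_le_s0: "p \<in> {0..1} \<Longrightarrow> 2 * Omega \<omega> p \<le> (s0 \<omega>)\<^sup>2"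
  and s0_nonneg: "0 \<le> s0 \<omega>"
proof -
  let ?X = "(\<lambda>p. 2 * Omega \<omega> p) ` {0..1}"
  have "compact ?X"
    by (intro compact_continuous_image continuous_intros continuous_on_Omega) simp
  then have bdd: "bdd_above ?X"
    by (intro bounded_imp_bdd_above compact_imp_bounded)
  have "2 * Omega \<omega> 0 \<le> Sup ?X"
    by (intro cSup_upper[OF _ bdd]) simp
  then have "0 \<le> Sup ?X"
    by (simp add: Omega_def)
  then have s0_sq: "(s0 \<omega>)\<^sup>2 = Sup ?X"
    by (simp add: s0_def)
  show "2 * Omega \<omega> p \<le> (s0 \<omega>)\<^sup>2" if "p \<in> {0..1}"
    unfolding s0_sq using that by (intro cSup_upper[OF _ bdd]) simp
  show "0 \<le> s0 \<omega>"
    using \<open>0 \<le> Sup ?X\<close> by (simp add: s0_def)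
qed

lemma radicand_pos:
  assumes "s0 \<omega> < s" "p \<in> {0..1}"
  shows "0 < s\<^sup>2 - 2 * Omega \<omega> p"
proof -
  have "(s0 \<omega>)\<^sup>2 < s\<^sup>2"
    using assms(1) s0_nonneg by (intro power_strict_mono) auto
  then show ?thesis
    using Omega_le_s0[OF assms(2)] by linarith
qed

lemma Hp_pos: "s0 \<omega> < s \<Longrightarrow> p \<in> {0..1} \<Longrightarrow> 0 < Hp \<omega> p s"
  using radicand_pos[of s p] by (simp add: Hp_def)

lemma Hp_sq_radicand: "s0 \<omega> < s \<Longrightarrow> p \<in> {0..1} \<Longrightarrow> (Hp \<omega> p s)\<^sup>2 * (s\<^sup>2 - 2 * Omega \<omega> p) = 1"
  using radicand_pos[of s p] by (simp add: Hp_def power_divide)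

lemma Hp_has_real_derivative:
  assumes "s0 \<omega> < s" "p \<in> {0..1}"
  shows "((\<lambda>s. Hp \<omega> p s) has_real_derivative - s * (Hp \<omega> p s) ^ 3) (at s)"
proof -
  define A where "A = s\<^sup>2 - 2 * Omega \<omega> p"
  have "0 < A"
    unfolding A_def using radicand_pos[OF assms] .
  have "((\<lambda>s. s\<^sup>2 - 2 * Omega \<omega> p) has_real_derivative 2 * s) (at s)"
    by (auto intro!: derivative_eq_intros)
  then have "((\<lambda>s. sqrt (s\<^sup>2 - 2 * Omega \<omega> p)) has_real_derivative
      inverse (sqrt A) / 2 * (2 * s)) (at s)"
    using DERIV_real_sqrt[OF \<open>0 < A\<close>] unfolding A_def by (rule DERIV_chain2[rotated])
  then have "((\<lambda>s. inverse (sqrt (s\<^sup>2 - 2 * Omega \<omega> p))) has_real_derivative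
      - (inverse (sqrt A) / 2 * (2 * s) * inverse (sqrt A ^ Suc (Suc 0)))) (at s)"
    using \<open>0 < A\<close> unfolding A_def by (intro DERIV_inverse_fun) auto
  moreover have "- (inverse (sqrt A) / 2 * (2 * s) * inverse (sqrt A ^ Suc (Suc 0)))
      = - s * (1 / sqrt A) ^ 3"
    by (simp add: algebra_simps power3_eq_cube inverse_eq_divide)
  ultimately show ?thesis
    unfolding Hp_def A_def by (simp only: inverse_eq_divide)
qed

lemma continuous_on_Hp_param: "continuous_on ({s0 \<omega><..} \<times> {0..1}) (\<lambda>z. Hp \<omega> (snd z) (fst z))"
proof -
  have "continuous_on ({s0 \<omega><..} \<times> {0..1}) (\<lambda>z. Omega \<omega> (snd z))"
    by (rule continuous_on_compose2[OF continuous_on_Omega continuous_on_snd]) auto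
  then show ?thesis
    unfolding Hp_def using radicand_pos
    by (intro continuous_intros) (auto simp: less_le)
qed

lemma continuous_on_Hp: "s0 \<omega> < s \<Longrightarrow> continuous_on {0..1} (\<lambda>p. Hp \<omega> p s)"
  using continuous_on_compose2[OF continuous_on_Hp_param
      continuous_on_Pair[OF continuous_on_const continuous_on_id], of s "{0..1}"]
  by auto

lemma Hp_cube_integral_pos: "s0 \<omega> < s \<Longrightarrow> 0 < Hp_cube_integral \<omega> s"
  using integral_less_real[of 0 1 "\<lambda>_. 0" "\<lambda>p. (Hp \<omega> p s) ^ 3"]
  by (simp add: Hp_cube_integral_def Hp_pos continuous_on_Hp continuous_intros)

lemma Hp_cube_integral_strict_antimono: "strict_antimono_on {s0 \<omega><..} (Hp_cube_integral \<omega>)"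
proof (rule monotone_onI)
  fix s t assume "s \<in> {s0 \<omega><..}" "t \<in> {s0 \<omega><..}" "s < t"
  have "Hp \<omega> p t < Hp \<omega> p s" if "p \<in> {0..1}" for p
  proof -
    have "s\<^sup>2 < t\<^sup>2"
      using \<open>s \<in> {s0 \<omega><..}\<close> \<open>s < t\<close> s0_nonneg by (intro power_strict_mono) auto
    then show ?thesis
      using radicand_pos[of s p] \<open>s \<in> {s0 \<omega><..}\<close> that by (simp add: Hp_def divide_strict_left_mono)
  qed
  then show "Hp_cube_integral \<omega> t < Hp_cube_integral \<omega> s"
    unfolding Hp_cube_integral_def
    using \<open>s \<in> {s0 \<omega><..}\<close> \<open>t \<in> {s0 \<omega><..}\<close>
    by (intro integral_less_real)
      (auto intro!: continuous_intros continuous_on_Hp power_strict_mono less_imp_le[OF Hp_pos])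
qed

lemma depth_has_real_derivative:
  assumes "s0 \<omega> < s"
  shows "(depth \<omega> has_real_derivative - s * Hp_cube_integral \<omega> s) (at s)"
proof -
  have "((\<lambda>s. integral {0..1} (\<lambda>p. Hp \<omega> p s)) has_real_derivative
      integral {0..1} (\<lambda>p. - s * (Hp \<omega> p s) ^ 3)) (at s)"
    using assms Hp_has_real_derivative continuous_on_Hp
    by (intro has_real_derivative_integral_param[where U = "{s0 \<omega><..}"])
      (auto simp: case_prod_unfold intro!: continuous_intros continuous_on_Hp_param)
  moreover have "depth \<omega> = (\<lambda>s. integral {0..1} (\<lambda>p. Hp \<omega> p s))"
    by (simp add: fun_eq_iff depth_def H_def)
  ultimately show ?thesis
    by (simp add: Hp_cube_integral_def)
qed

lemma R_has_real_derivative: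
  assumes "s0 \<omega> < s"
  shows "(R \<omega> has_real_derivative s * (1 - Hp_cube_integral \<omega> s)) (at s)"
proof -
  have "((\<lambda>s. s\<^sup>2 / 2 - Omega \<omega> 1 + depth \<omega> s) has_real_derivative
      s * (1 - Hp_cube_integral \<omega> s)) (at s)"
    by (auto intro!: derivative_eq_intros depth_has_real_derivative[OF assms] simp: algebra_simps)
  moreover have "R \<omega> = (\<lambda>s. s\<^sup>2 / 2 - Omega \<omega> 1 + depth \<omega> s)"
    by (simp add: fun_eq_iff R_def)
  ultimately show ?thesis
    by simp
qed

lemma continuous_on_R: "continuous_on {s0 \<omega><..} (R \<omega>)"
  using R_has_real_derivative
  by (intro continuous_at_imp_continuous_on ballI DERIV_isCont) auto

context
  fixes sc :: real
  assumes sc_gt: "s0 \<omega> < sc" and sc_crit: "Hp_cube_integral \<omega> sc = 1"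
begin

lemma R_strict_antimono_before_critical: "strict_antimono_on {s0 \<omega><..sc} (R \<omega>)"
proof (rule strict_antimono_on_if_deriv_neg)
  show "continuous_on {s0 \<omega><..sc} (R \<omega>)"
    by (rule continuous_on_subset[OF continuous_on_R]) auto
  fix s assume "s \<in> interior {s0 \<omega><..sc}"
  then have s: "s0 \<omega> < s" "s < sc"
    by auto
  show "(R \<omega> has_real_derivative s * (1 - Hp_cube_integral \<omega> s)) (at s)"
    using R_has_real_derivative[OF s(1)] .
  have "1 < Hp_cube_integral \<omega> s"
    using monotone_onD[OF Hp_cube_integral_strict_antimono, of s sc] s sc_crit by simp
  then show "s * (1 - Hp_cube_integral \<omega> s) < 0"
    using s s0_nonneg by (simp add: mult_pos_neg)
qed simp

lemma R_strict_mono_after_critical: "strict_mono_on {sc..} (R \<omega>)"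
proof (rule strict_mono_on_if_deriv_pos)
  show "continuous_on {sc..} (R \<omega>)"
    by (rule continuous_on_subset[OF continuous_on_R]) (use sc_gt in auto)
  fix s assume "s \<in> interior {sc..}"
  then have s: "sc < s"
    by auto
  show "(R \<omega> has_real_derivative s * (1 - Hp_cube_integral \<omega> s)) (at s)"
    using R_has_real_derivative s sc_gt by simp
  have "Hp_cube_integral \<omega> s < 1"
    using monotone_onD[OF Hp_cube_integral_strict_antimono, of sc s] s sc_gt sc_crit by simp
  then show "0 < s * (1 - Hp_cube_integral \<omega> s)"
    using s sc_gt s0_nonneg by simp
qed simp

end

lemma integral_H_Hp:
  assumes "s0 \<omega> < s"
  shows "integral {0..1} (\<lambda>p. H \<omega> p s * Hp \<omega> p s) = (depth \<omega> s)\<^sup>2 / 2"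
proof -
  have "((\<lambda>p. H \<omega> p s * Hp \<omega> p s) has_integral (H \<omega> 1 s)\<^sup>2 / 2 - (H \<omega> 0 s)\<^sup>2 / 2) {0..1}"
  proof (rule fundamental_theorem_of_calculus)
    fix p :: real assume "p \<in> {0..1}"
    have "((\<lambda>q. H \<omega> q s) has_real_derivative Hp \<omega> p s) (at p within {0..1})"
      unfolding H_def has_real_derivative_iff_has_vector_derivative
      by (rule integral_has_vector_derivative[OF continuous_on_Hp[OF assms] \<open>p \<in> {0..1}\<close>])
    then have "((\<lambda>q. (H \<omega> q s)\<^sup>2 / 2) has_real_derivative H \<omega> p s * Hp \<omega> p s) (at p within {0..1})"
      by (auto intro!: derivative_eq_intros)
    then show "((\<lambda>q. (H \<omega> q s)\<^sup>2 / 2) has_vector_derivative H \<omega> p s * Hp \<omega> p s) (at p within {0..1})"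
      by (simp add: has_real_derivative_iff_has_vector_derivative)
  qed simp
  then show ?thesis
    by (simp add: integral_unique depth_def H_def)
qed

lemma continuous_on_sigma_integrand:
  "s0 \<omega> < s \<Longrightarrow>
    continuous_on {0..1} (\<lambda>p. 1 / (2 * Hp \<omega> p s) + (Omega \<omega> 1 - Omega \<omega> p + r) * Hp \<omega> p s)"
  using Hp_pos by (intro continuous_intros continuous_on_Hp continuous_on_Omega) force+

lemma sigma_eq:
  assumes "s0 \<omega> < s"
  shows "sigma \<omega> s r =
    integral {0..1} (\<lambda>p. 1 / (2 * Hp \<omega> p s) + (Omega \<omega> 1 - Omega \<omega> p + r) * Hp \<omega> p s)
    - (depth \<omega> s)\<^sup>2 / 2"
proof -
  have "sigma \<omega> s r = integral {0..1} (\<lambda>p.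
      (1 / (2 * Hp \<omega> p s) + (Omega \<omega> 1 - Omega \<omega> p + r) * Hp \<omega> p s) - H \<omega> p s * Hp \<omega> p s)"
    unfolding sigma_def
    by (rule integral_cong) (use Hp_pos[OF assms] in \<open>auto simp: field_simps power2_eq_square\<close>)
  also have "\<dots> =
      integral {0..1} (\<lambda>p. 1 / (2 * Hp \<omega> p s) + (Omega \<omega> 1 - Omega \<omega> p + r) * Hp \<omega> p s)
      - integral {0..1} (\<lambda>p. H \<omega> p s * Hp \<omega> p s)"
  proof (intro integral_diff integrable_continuous_real)
    have "continuous_on {0..1} (\<lambda>p. H \<omega> p s)"
      unfolding H_def
      using integrable_continuous_real[OF continuous_on_Hp[OF assms]]
      by (rule indefinite_integral_continuous_1)
    then show "continuous_on {0..1} (\<lambda>p. H \<omega> p s * Hp \<omega> p s)"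
      by (intro continuous_intros continuous_on_Hp assms)
    show "continuous_on {0..1} (\<lambda>p. 1 / (2 * Hp \<omega> p s) + (Omega \<omega> 1 - Omega \<omega> p + r) * Hp \<omega> p s)"
      using assms by (rule continuous_on_sigma_integrand)
  qed
  finally show ?thesis
    using integral_H_Hp[OF assms] by simp
qed

lemma sigma_integrand_has_real_derivative:
  assumes "s0 \<omega> < s" "p \<in> {0..1}"
  shows "((\<lambda>s. 1 / (2 * Hp \<omega> p s) + (Omega \<omega> 1 - Omega \<omega> p + r) * Hp \<omega> p s) has_real_derivative
    s * (s\<^sup>2 / 2 - Omega \<omega> 1 - r) * (Hp \<omega> p s) ^ 3) (at s)"
proof -
  let ?h = "Hp \<omega> p s" and ?k = "Omega \<omega> 1 - Omega \<omega> p + r"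
  have "((\<lambda>s. 1 / (2 * Hp \<omega> p s) + ?k * Hp \<omega> p s) has_real_derivative
      s * ?h ^ 3 / (2 * (?h * ?h)) - s * ?h ^ 3 * ?k) (at s)"
    using Hp_has_real_derivative[OF assms] Hp_pos[OF assms]
    by (auto intro!: derivative_eq_intros)
  also have "s * ?h ^ 3 / (2 * (?h * ?h)) = s * ?h / 2 * (?h\<^sup>2 * (s\<^sup>2 - 2 * Omega \<omega> p))"
    using Hp_sq_radicand[OF assms] Hp_pos[OF assms] by (simp add: power3_eq_cube)
  also have "\<dots> - s * ?h ^ 3 * ?k = s * (s\<^sup>2 / 2 - Omega \<omega> 1 - r) * ?h ^ 3"
    by (simp add: algebra_simps power2_eq_square power3_eq_cube)
  finally show ?thesis .
qed

lemma sigma_has_real_derivative: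
  assumes "s0 \<omega> < s"
  shows "((\<lambda>s. sigma \<omega> s r) has_real_derivative s * Hp_cube_integral \<omega> s * (R \<omega> s - r)) (at s)"
proof -
  define G where "G s = integral {0..1}
    (\<lambda>p. 1 / (2 * Hp \<omega> p s) + (Omega \<omega> 1 - Omega \<omega> p + r) * Hp \<omega> p s)" for s
  have "(G has_real_derivative
      integral {0..1} (\<lambda>p. s * (s\<^sup>2 / 2 - Omega \<omega> 1 - r) * (Hp \<omega> p s) ^ 3)) (at s)"
    unfolding G_def
    using assms sigma_integrand_has_real_derivative continuous_on_sigma_integrand
    by (intro has_real_derivative_integral_param[where U = "{s0 \<omega><..}"])
      (auto simp: case_prod_unfold intro!: continuous_intros continuous_on_Hp_param)
  then have "((\<lambda>s. G s - (depth \<omega> s)\<^sup>2 / 2) has_real_derivative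
      s * (s\<^sup>2 / 2 - Omega \<omega> 1 - r) * Hp_cube_integral \<omega> s
      - depth \<omega> s * (- s * Hp_cube_integral \<omega> s)) (at s)"
    by (auto intro!: derivative_eq_intros depth_has_real_derivative[OF assms]
        simp: Hp_cube_integral_def)
  also have "s * (s\<^sup>2 / 2 - Omega \<omega> 1 - r) * Hp_cube_integral \<omega> s
      - depth \<omega> s * (- s * Hp_cube_integral \<omega> s) = s * Hp_cube_integral \<omega> s * (R \<omega> s - r)"
    by (simp add: R_def algebra_simps)
  finally show ?thesis
  proof (rule has_field_derivative_transform_within_open)
    show "G x - (depth \<omega> x)\<^sup>2 / 2 = sigma \<omega> x r" if "x \<in> {s0 \<omega><..}" for x
      using sigma_eq[of x r] that by (simp add: G_def)
  qed (use assms in auto)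
qed

lemma continuous_on_sigma: "continuous_on {s0 \<omega><..} (\<lambda>s. sigma \<omega> s r)"
  using sigma_has_real_derivative
  by (intro continuous_at_imp_continuous_on ballI DERIV_isCont) auto

lemma sigma_derivative_factor_pos: "s0 \<omega> < s \<Longrightarrow> 0 < s * Hp_cube_integral \<omega> s"
  using s0_nonneg Hp_cube_integral_pos[of s] by simp

lemma sigma_strict_mono_on:
  assumes "convex J" "open J" "J \<subseteq> {s0 \<omega><..}" "\<And>s. s \<in> J \<Longrightarrow> r < R \<omega> s"
  shows "strict_mono_on J (\<lambda>s. sigma \<omega> s r)"
proof (rule strict_mono_on_if_deriv_pos[OF assms(1)])
  show "continuous_on J (\<lambda>s. sigma \<omega> s r)"
    using continuous_on_sigma assms(3) by (rule continuous_on_subset)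
  fix s assume "s \<in> interior J"
  then have "s \<in> J"
    using interior_subset by blast
  then show "((\<lambda>s. sigma \<omega> s r) has_real_derivative s * Hp_cube_integral \<omega> s * (R \<omega> s - r)) (at s)"
    and "0 < s * Hp_cube_integral \<omega> s * (R \<omega> s - r)"
    using assms(3,4) sigma_has_real_derivative sigma_derivative_factor_pos by auto
qed

lemma sigma_strict_antimono_on:
  assumes "convex J" "open J" "J \<subseteq> {s0 \<omega><..}" "\<And>s. s \<in> J \<Longrightarrow> R \<omega> s < r"
  shows "strict_antimono_on J (\<lambda>s. sigma \<omega> s r)"
proof (rule strict_antimono_on_if_deriv_neg[OF assms(1)])
  show "continuous_on J (\<lambda>s. sigma \<omega> s r)"
    using continuous_on_sigma assms(3) by (rule continuous_on_subset)
  fix s assume "s \<in> interior J"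
  then have "s \<in> J"
    using interior_subset by blast
  then show "((\<lambda>s. sigma \<omega> s r) has_real_derivative s * Hp_cube_integral \<omega> s * (R \<omega> s - r)) (at s)"
    and "s * Hp_cube_integral \<omega> s * (R \<omega> s - r) < 0"
    using assms(3,4) sigma_has_real_derivative sigma_derivative_factor_pos
    by (auto simp: mult_pos_neg)
qed

lemma inverse_Hp_ge:
  assumes "s0 \<omega> < s" "p \<in> {0..1}"
  shows "s - s0 \<omega> \<le> 1 / Hp \<omega> p s"
proof -
  have "(s - s0 \<omega>)\<^sup>2 \<le> s\<^sup>2 - (s0 \<omega>)\<^sup>2"
    using assms(1) s0_nonneg by (simp add: power2_eq_square algebra_simps mult_right_mono)
  also have "\<dots> \<le> s\<^sup>2 - 2 * Omega \<omega> p"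
    using Omega_le_s0[OF assms(2)] by simp
  finally show ?thesis
    by (simp add: Hp_def real_le_rsqrt)
qed

lemma sigma_lower_bound:
  obtains C where "\<And>s. s0 \<omega> + 1 \<le> s \<Longrightarrow> s / 2 - C \<le> sigma \<omega> s r"
proof -
  obtain K where K: "\<forall>p\<in>{0..1}. \<bar>Omega \<omega> p\<bar> \<le> K"
    using compact_imp_bounded[OF compact_continuous_image[OF continuous_on_Omega compact_Icc]]
    by (auto simp: bounded_iff)
  have "s / 2 - (s0 \<omega> / 2 + 2 * K + \<bar>r\<bar> + 1 / 2) \<le> sigma \<omega> s r" if "s0 \<omega> + 1 \<le> s" for s
  proof -
    have s: "s0 \<omega> < s"
      using that by simp
    have Hp_le_1: "Hp \<omega> p s \<le> 1" if "p \<in> {0..1}" for p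
    proof -
      have "1 * Hp \<omega> p s \<le> (s - s0 \<omega>) * Hp \<omega> p s"
        using Hp_pos[OF s that] \<open>s0 \<omega> + 1 \<le> s\<close> by (intro mult_right_mono) auto
      also have "\<dots> \<le> 1"
        using inverse_Hp_ge[OF s that] Hp_pos[OF s that] by (simp add: pos_le_divide_eq)
      finally show ?thesis
        by simp
    qed
    have "integral {0..1::real} (\<lambda>_. (s - s0 \<omega>) / 2 - (2 * K + \<bar>r\<bar>))
        \<le> integral {0..1} (\<lambda>p. 1 / (2 * Hp \<omega> p s) + (Omega \<omega> 1 - Omega \<omega> p + r) * Hp \<omega> p s)"
    proof (rule integral_le)
      fix p :: real assume p: "p \<in> {0..1}"
      have "\<bar>Omega \<omega> 1\<bar> \<le> K" "\<bar>Omega \<omega> p\<bar> \<le> K"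
        using K p by auto
      then have "\<bar>Omega \<omega> 1 - Omega \<omega> p + r\<bar> \<le> 2 * K + \<bar>r\<bar>"
        by arith
      then have "\<bar>(Omega \<omega> 1 - Omega \<omega> p + r) * Hp \<omega> p s\<bar> \<le> (2 * K + \<bar>r\<bar>) * 1"
        unfolding abs_mult using Hp_le_1[OF p] Hp_pos[OF s p] by (intro mult_mono) auto
      then have "- (2 * K + \<bar>r\<bar>) \<le> (Omega \<omega> 1 - Omega \<omega> p + r) * Hp \<omega> p s"
        by (simp add: abs_le_iff)
      moreover have "(s - s0 \<omega>) / 2 \<le> 1 / (2 * Hp \<omega> p s)"
        using divide_right_mono[OF inverse_Hp_ge[OF s p], of 2] by simp
      ultimately show "(s - s0 \<omega>) / 2 - (2 * K + \<bar>r\<bar>)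
          \<le> 1 / (2 * Hp \<omega> p s) + (Omega \<omega> 1 - Omega \<omega> p + r) * Hp \<omega> p s"
        by linarith
    qed (use continuous_on_sigma_integrand[OF s] in \<open>auto intro: integrable_continuous_real\<close>)
    moreover have "0 \<le> depth \<omega> s" "depth \<omega> s \<le> 1"
      using integral_nonneg[of "\<lambda>p. Hp \<omega> p s" "{0..1}"]
        integral_le[of "\<lambda>p. Hp \<omega> p s" "{0..1}" "\<lambda>_. 1"]
        integrable_continuous_real[OF continuous_on_Hp[OF s]] Hp_pos[OF s] Hp_le_1
      by (auto simp: depth_def H_def less_imp_le)
    then have "(depth \<omega> s)\<^sup>2 \<le> 1"
      by (simp add: power_le_one)
    ultimately show ?thesis
      using sigma_eq[OF s, of r] by (simp add: field_simps)
  qed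
  then show thesis
    by (rule that)
qed

lemma sigma_tendsto_at_top: "filterlim (\<lambda>s. sigma \<omega> s r) at_top at_top"
proof -
  obtain C where C: "\<And>s. s0 \<omega> + 1 \<le> s \<Longrightarrow> s / 2 - C \<le> sigma \<omega> s r"
    using sigma_lower_bound[where r = r] by blast
  have "filterlim (\<lambda>s::real. s / 2 - C) at_top at_top"
    unfolding filterlim_at_top eventually_at_top_linorder
  proof
    fix Z :: real
    show "\<exists>N. \<forall>s\<ge>N. Z \<le> s / 2 - C"
      by (intro exI[of _ "2 * (Z + C)"]) auto
  qed
  moreover have "eventually (\<lambda>s. s / 2 - C \<le> sigma \<omega> s r) at_top"
    using eventually_ge_at_top[of "s0 \<omega> + 1"] by eventually_elim (rule C)
  ultimately show ?thesis
    by (rule filterlim_at_top_mono)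
qed

end

theorem lemma3p6:
  fixes \<omega> :: "real \<Rightarrow> real" and r sc sm sp :: real
  assumes omega_int: "\<omega> integrable_on {0..1}"
    and omega_bdd: "bounded (\<omega> ` {0..1})"
    and sc_gt: "s0 \<omega> < sc"
    and sc_crit: "integral {0..1} (\<lambda>p. (sc\<^sup>2 - 2 * Omega \<omega> p) powr (-3/2)) = 1"
    and r_gt: "R \<omega> sc < r"
    and r_lt: "ereal r < R0 \<omega>"
    and sm: "s0 \<omega> < sm" "sm < sc" "R \<omega> sm = r"
    and sp: "sc < sp" "R \<omega> sp = r"
  shows "strict_mono_on {s0 \<omega><..<sm} (\<lambda>s. sigma \<omega> s r)
       \<and> strict_antimono_on {sm<..<sp} (\<lambda>s. sigma \<omega> s r)
       \<and> strict_mono_on {sp<..} (\<lambda>s. sigma \<omega> s r)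
       \<and> filterlim (\<lambda>s. sigma \<omega> s r) at_top at_top"
proof -
  interpret vorticity \<omega>
    using omega_int by unfold_locales
  have "Hp_cube_integral \<omega> sc = integral {0..1} (\<lambda>p. (sc\<^sup>2 - 2 * Omega \<omega> p) powr (-3/2))"
    unfolding Hp_cube_integral_def Hp_def
  proof (rule integral_cong)
    fix p :: real assume "p \<in> {0..1}"
    show "(1 / sqrt (sc\<^sup>2 - 2 * Omega \<omega> p)) ^ 3 = (sc\<^sup>2 - 2 * Omega \<omega> p) powr (-3/2)"
      by (rule powr_minus_three_halves[OF radicand_pos[OF sc_gt \<open>p \<in> {0..1}\<close>], symmetric])
  qed
  then have crit: "Hp_cube_integral \<omega> sc = 1"
    using sc_crit by simp
  note R_dec = monotone_onD[OF R_strict_antimono_before_critical[OF sc_gt crit]]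
  note R_inc = monotone_onD[OF R_strict_mono_after_critical[OF sc_gt crit]]
  have "r < R \<omega> s" if "s \<in> {s0 \<omega><..<sm}" for s
    using R_dec[of s sm] that sm by auto
  moreover have "R \<omega> s < r" if "s \<in> {sm<..<sp}" for s
    using R_dec[of sm s] R_inc[of s sp] that sm sp r_gt by (cases s sc rule: linorder_cases) auto
  moreover have "r < R \<omega> s" if "s \<in> {sp<..}" for s
    using R_inc[of sp s] that sp by auto
  ultimately show ?thesis
    using sm sp
    by (auto intro!: sigma_strict_mono_on sigma_strict_antimono_on sigma_tendsto_at_top)
qed

end
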